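(* Let $(G,S,\mathcal{P},k)$ be an instance of \textsc{Pair-Constrained Edge Subset Feedback Vertex Set} with $G=(V,E)$. Let $Z\subseteq V\setminus V(S)$ be such that $G-Z$ contains no $S$-cycle, and let $Y$ be a set with $Z\subseteq Y\subseteq V\setminus V(S)$ (hence $G-Y$ contains no $S$-cycle). Let $e=\{I,J\}$ be an edge of $H_Y$ such that $e$ sees no single vertex of $Y$ and every pair $\{x,y\}$ with $x,y\in Y$ seen by $e$ belongs to $\mathcal{P}$. Then $e_S$ is irrelevant for $(G,S,\mathcal{P},k)$.
   Context: Graphs are finite, undirected, may contain loops and parallel edges; an $S$-cycle is a cycle containing an edge of $S$; $V(S)$ is the set of endpoints of edges of $S$. An instance $(G,S,\mathcal{P},k)$ of \textsc{Pair-Constrained Edge Subset Feedback Vertex Set} consists of a graph $G=(V,E)$, $S\subseteq E$, a set $\mathcal{P}$ of unordered pairs of distinct vertices (pair-constraints), and $k\in\mathbb{N}$; a solution is $X\subseteq V$ with $|X|\le k$ such that $G-X$ contains no $S$-cycle and $X\cap\{x,y\}\neq\emptyset$ for every $\{x,y\}\in\mathcal{P}$. An edge $f\in S$ is irrelevant for $(G,S,\mathcal{P},k)$ if for every $X\subseteq V$: $X$ is a solution for $(G,S,\mathcal{P},k)$ iff $X$ is a solution for $(G,S\setminus\{f\},\mathcal{P},k)$. Bubbles: the connected components of $G-Y-S$ (delete the vertices of $Y$ and the edges of $S$); $V_I$ denotes the vertex set of bubble $I$. $H_Y$ is the graph whose vertices are the bubbles, with bubbles $I,J$ adjacent iff some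 edge of $S$ joins $V_I$ and $V_J$; since $G-Y$ has no $S$-cycle, for adjacent $I,J$ there is exactly one such edge, denoted $e_S$ for $e=\{I,J\}$. $H_Y^+$ is obtained from $H_Y$ by adding the vertices of $Y$ and an edge $\{y,I\}$ whenever $y\in Y$ is adjacent in $G$ to a vertex of $V_I$. An edge $e=\{I,J\}$ of $H_Y$ sees a vertex $y\in Y$ if $\{I,y\},\{J,y\}\in E(H_Y^+)$, and sees a pair $\{x,y\}$ of distinct $x,y\in Y$ if $\{I,x\},\{J,y\}\in E(H_Y^+)$ or $\{I,y\},\{J,x\}\in E(H_Y^+)$. *)

theory Defs
  imports Main
begin

text \<open>Multigraphs (loops and parallel edges allowed): a vertex set V, an edge set E of
edge identifiers, and an endpoint map ends; a loop has one endpoint, other edges two.\<close>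

definition multigraph :: "'v set \<Rightarrow> 'e set \<Rightarrow> ('e \<Rightarrow> 'v set) \<Rightarrow> bool" where
  "multigraph V E ends \<longleftrightarrow> finite V \<and> finite E \<and>
     (\<forall>e\<in>E. ends e \<subseteq> V \<and> (card (ends e) = 1 \<or> card (ends e) = 2))"

text \<open>A cycle: vertices v0..v(n-1) pairwise distinct, edges e0..e(n-1) pairwise distinct,
n >= 1, edge ei joins vi and v(i+1 mod n). (n = 1: a loop; n = 2: two parallel edges.)\<close>
definition is_cycle :: "'v set \<Rightarrow> 'e set \<Rightarrow> ('e \<Rightarrow> 'v set) \<Rightarrow> 'v list \<Rightarrow> 'e list \<Rightarrow> bool" where
  "is_cycle V E ends vs es \<longleftrightarrow> 1 \<le> length vs \<and> length es = length vs \<and>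
     distinct vs \<and> distinct es \<and> set vs \<subseteq> V \<and> set es \<subseteq> E \<and>
     (\<forall>i<length vs. ends (es ! i) = {vs ! i, vs ! (Suc i mod length vs)})"

definition has_S_cycle_minus :: "'v set \<Rightarrow> 'e set \<Rightarrow> ('e \<Rightarrow> 'v set) \<Rightarrow> 'e set \<Rightarrow> 'v set \<Rightarrow> bool" where
  "has_S_cycle_minus V E ends S X \<longleftrightarrow>
     (\<exists>vs es. is_cycle (V - X) {e\<in>E. ends e \<inter> X = {}} ends vs es \<and> set es \<inter> S \<noteq> {})"

definition VS :: "('e \<Rightarrow> 'v set) \<Rightarrow> 'e set \<Rightarrow> 'v set" where
  "VS ends S = (\<Union>e\<in>S. ends e)"

definition pcesfvs_instance :: "'v set \<Rightarrow> 'e set \<Rightarrow> ('e \<Rightarrow> 'v set) \<Rightarrow> 'e set \<Rightarrow> 'v set set \<Rightarrow> nat \<Rightarrow> bool" where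
  "pcesfvs_instance V E ends S P k \<longleftrightarrow> multigraph V E ends \<and> S \<subseteq> E \<and>
     (\<forall>p\<in>P. \<exists>x y. x \<in> V \<and> y \<in> V \<and> x \<noteq> y \<and> p = {x, y})"

definition is_solution :: "'v set \<Rightarrow> 'e set \<Rightarrow> ('e \<Rightarrow> 'v set) \<Rightarrow> 'e set \<Rightarrow> 'v set set \<Rightarrow> nat \<Rightarrow> 'v set \<Rightarrow> bool" where
  "is_solution V E ends S P k X \<longleftrightarrow> X \<subseteq> V \<and> card X \<le> k \<and>
     \<not> has_S_cycle_minus V E ends S X \<and> (\<forall>p\<in>P. X \<inter> p \<noteq> {})"

definition irrelevant :: "'v set \<Rightarrow> 'e set \<Rightarrow> ('e \<Rightarrow> 'v set) \<Rightarrow> 'e set \<Rightarrow> 'v set set \<Rightarrow> nat \<Rightarrow> 'e \<Rightarrow> bool" where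
  "irrelevant V E ends S P k f \<longleftrightarrow> f \<in> S \<and>
     (\<forall>X. X \<subseteq> V \<longrightarrow> (is_solution V E ends S P k X \<longleftrightarrow> is_solution V E ends (S - {f}) P k X))"

definition bubble_adj :: "'e set \<Rightarrow> ('e \<Rightarrow> 'v set) \<Rightarrow> 'e set \<Rightarrow> 'v set \<Rightarrow> 'v \<Rightarrow> 'v \<Rightarrow> bool" where
  "bubble_adj E ends S Y u v \<longleftrightarrow> (\<exists>e\<in>E - S. ends e \<inter> Y = {} \<and> ends e = {u, v})"

definition bubble_of :: "'e set \<Rightarrow> ('e \<Rightarrow> 'v set) \<Rightarrow> 'e set \<Rightarrow> 'v set \<Rightarrow> 'v \<Rightarrow> 'v set" where
  "bubble_of E ends S Y u = {v. (u, v) \<in> {(a, b). bubble_adj E ends S Y a b}\<^sup>*}"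

text \<open>Bubbles: connected components of G - Y - S (vertex sets).\<close>
definition is_bubble :: "'v set \<Rightarrow> 'e set \<Rightarrow> ('e \<Rightarrow> 'v set) \<Rightarrow> 'e set \<Rightarrow> 'v set \<Rightarrow> 'v set \<Rightarrow> bool" where
  "is_bubble V E ends S Y I \<longleftrightarrow> (\<exists>u\<in>V - Y. I = bubble_of E ends S Y u)"

definition H_edge :: "'v set \<Rightarrow> 'e set \<Rightarrow> ('e \<Rightarrow> 'v set) \<Rightarrow> 'e set \<Rightarrow> 'v set \<Rightarrow> 'v set \<Rightarrow> 'v set \<Rightarrow> bool" where
  "H_edge V E ends S Y I J \<longleftrightarrow> is_bubble V E ends S Y I \<and> is_bubble V E ends S Y J \<and> I \<noteq> J \<and>
     (\<exists>f\<in>S. \<exists>a\<in>I. \<exists>b\<in>J. ends f = {a, b})"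

definition Hplus_adj :: "'e set \<Rightarrow> ('e \<Rightarrow> 'v set) \<Rightarrow> 'v \<Rightarrow> 'v set \<Rightarrow> bool" where
  "Hplus_adj E ends y I \<longleftrightarrow> (\<exists>e\<in>E. \<exists>u\<in>I. ends e = {y, u})"

definition sees_vertex :: "'e set \<Rightarrow> ('e \<Rightarrow> 'v set) \<Rightarrow> 'v set \<Rightarrow> 'v set \<Rightarrow> 'v \<Rightarrow> bool" where
  "sees_vertex E ends I J y \<longleftrightarrow> Hplus_adj E ends y I \<and> Hplus_adj E ends y J"

definition sees_pair :: "'e set \<Rightarrow> ('e \<Rightarrow> 'v set) \<Rightarrow> 'v set \<Rightarrow> 'v set \<Rightarrow> 'v \<Rightarrow> 'v \<Rightarrow> bool" where
  "sees_pair E ends I J x y \<longleftrightarrow> x \<noteq> y \<and>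
     ((Hplus_adj E ends x I \<and> Hplus_adj E ends y J) \<or> (Hplus_adj E ends y I \<and> Hplus_adj E ends x J))"

end

theory Submission imports Defs begin

text \<open>A cycle through \<open>e\<^sub>S\<close> that uses no other edge of \<open>S\<close> becomes, after deleting \<open>e\<^sub>S\<close>,
a walk in \<open>G - S\<close> from the bubble \<open>I\<close> to the bubble \<open>J\<close>. Such a walk can only leave a bubble
through a vertex of \<open>Y\<close>, so the cycle contains a vertex of \<open>Y\<close> adjacent to \<open>I\<close> and one adjacent
to \<open>J\<close>. These are either one vertex seen by the edge \<open>{I,J}\<close>, which is excluded, or a pair
seen by it, which lies in \<open>\<P>\<close> and therefore meets every solution. Hence every solution for
\<open>S - {e\<^sub>S}\<close> already destroys all \<open>S\<close>-cycles.\<close>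

definition walk_on :: "'e set \<Rightarrow> ('e \<Rightarrow> 'v set) \<Rightarrow> (nat \<Rightarrow> 'v) \<Rightarrow> nat \<Rightarrow> bool" where
  "walk_on F ends w m \<longleftrightarrow> (\<forall>t<m. \<exists>g\<in>F. ends g = {w t, w (Suc t)})"

lemma walk_on_mono: "walk_on F ends w m \<Longrightarrow> F \<subseteq> F' \<Longrightarrow> walk_on F' ends w m"
  unfolding walk_on_def by blast

lemma walk_on_reverse:
  assumes "walk_on F ends w m"
  shows "walk_on F ends (\<lambda>t. w (m - t)) m"
  unfolding walk_on_def
proof (intro allI impI)
  fix t assume t: "t < m"
  then obtain g where "g \<in> F" "ends g = {w (m - Suc t), w (Suc (m - Suc t))}"
    using assms[unfolded walk_on_def, rule_format, of "m - Suc t"] by auto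
  moreover have "Suc (m - Suc t) = m - t" using t by simp
  ultimately show "\<exists>g\<in>F. ends g = {w (m - t), w (m - Suc t)}"
    by (auto simp: insert_commute)
qed

lemma sym_bubble_adj: "sym {(a, b). bubble_adj E ends S Y a b}"
  by (auto simp: sym_def bubble_adj_def insert_commute)

lemma bubble_of_disjoint_Y:
  assumes "u \<notin> Y" "x \<in> bubble_of E ends S Y u"
  shows "x \<notin> Y"
proof -
  have "(u, x) \<in> {(a, b). bubble_adj E ends S Y a b}\<^sup>*"
    using assms(2) by (simp add: bubble_of_def)
  then show ?thesis
    by (induction rule: rtrancl_induct) (use assms(1) in \<open>auto simp: bubble_adj_def\<close>)
qed

lemma bubble_of_eqI:
  assumes "x \<in> bubble_of E ends S Y u" "x \<in> bubble_of E ends S Y u'"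
  shows "bubble_of E ends S Y u = bubble_of E ends S Y u'"
proof -
  let ?R = "{(a, b). bubble_adj E ends S Y a b}"
  have sym: "sym (?R\<^sup>*)" by (rule sym_rtrancl[OF sym_bubble_adj])
  have "(u, x) \<in> ?R\<^sup>*" "(x, u') \<in> ?R\<^sup>*"
    using assms sym by (auto simp: bubble_of_def dest: symD)
  then have "(u, u') \<in> ?R\<^sup>*"
    by (rule rtrancl_trans)
  moreover from this have "(u', u) \<in> ?R\<^sup>*"
    using sym by (rule symD[rotated])
  ultimately show ?thesis unfolding bubble_of_def by (meson rtrancl_trans)
qed

text \<open>The first vertex of the walk outside the bubble lies in \<open>Y\<close>, and its predecessor lies in the
bubble.\<close>

lemma walk_leaving_bubble_meets_Y:
  assumes u: "u \<notin> Y" and w0: "w 0 \<in> bubble_of E ends S Y u"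
    and wm: "w m \<notin> bubble_of E ends S Y u" and walk: "walk_on (E - S) ends w m"
  shows "\<exists>t\<le>m. w t \<in> Y \<and> Hplus_adj E ends (w t) (bubble_of E ends S Y u)"
proof -
  let ?B = "bubble_of E ends S Y u"
  have in_bubble: "w t \<in> ?B" if "t \<le> m" "\<forall>s\<le>t. w s \<notin> Y" for t
    using that
  proof (induction t)
    case 0 then show ?case using w0 by simp
  next
    case (Suc t)
    obtain g where g: "g \<in> E - S" "ends g = {w t, w (Suc t)}"
      using walk Suc.prems unfolding walk_on_def by (meson Suc_le_lessD)
    have "bubble_adj E ends S Y (w t) (w (Suc t))"
      using g Suc.prems unfolding bubble_adj_def by (intro bexI[of _ g]) auto
    then show ?case
      using Suc by (auto simp: bubble_of_def intro: rtrancl_into_rtrancl)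
  qed
  obtain t0 where t0: "t0 \<le> m" "w t0 \<in> Y"
    using in_bubble[of m] wm by auto
  have "w 0 \<notin> Y"
    using bubble_of_disjoint_Y[OF u w0] .
  with ex_least_nat_less[of "\<lambda>t. w t \<in> Y" t0] t0
  obtain t where t: "t < m" "\<forall>s\<le>t. w s \<notin> Y" "w (Suc t) \<in> Y"
    by (auto intro: less_le_trans)
  obtain g where "g \<in> E" "ends g = {w (Suc t), w t}"
    using walk t(1) unfolding walk_on_def by (auto simp: insert_commute)
  moreover have "w t \<in> ?B"
    using in_bubble[of t] t by simp
  ultimately have "Hplus_adj E ends (w (Suc t)) ?B"
    unfolding Hplus_adj_def by blast
  then show ?thesis
    using t by (intro exI[of _ "Suc t"]) auto
qed

lemma walk_between_bubbles_meets_Y: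
  assumes u: "u \<notin> Y" and u': "u' \<notin> Y"
    and I: "I = bubble_of E ends S Y u" and J: "J = bubble_of E ends S Y u'" and IJ: "I \<noteq> J"
    and w0: "w 0 \<in> I" and wm: "w m \<in> J" and walk: "walk_on (E - S) ends w m"
  shows "\<exists>t1 t2. w t1 \<in> Y \<and> w t2 \<in> Y \<and> Hplus_adj E ends (w t1) I \<and> Hplus_adj E ends (w t2) J"
proof -
  have "w m \<notin> I" "w 0 \<notin> J"
    using bubble_of_eqI[of _ E ends S Y u u'] w0 wm I J IJ by auto
  then show ?thesis
    using walk_leaving_bubble_meets_Y[OF u, where E = E and ends = ends and S = S and w = w and m = m]
      walk_leaving_bubble_meets_Y[OF u', where E = E and ends = ends and S = S
        and w = "\<lambda>t. w (m - t)" and m = m]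
      walk_on_reverse[OF walk] w0 wm I J walk
    by auto
qed

lemma cycle_minus_edge_walk:
  assumes cyc: "is_cycle V' E' ends vs es" and j: "j < length vs"
  shows "\<exists>w m. walk_on (set es - {es ! j}) ends w m \<and> ends (es ! j) = {w m, w 0}
           \<and> range w \<subseteq> set vs"
proof -
  define n where "n = length vs"
  have n: "length es = n" "1 \<le> n" "distinct es"
    and ends_es: "\<forall>i<n. ends (es ! i) = {vs ! i, vs ! (Suc i mod n)}"
    using cyc by (auto simp: is_cycle_def n_def)
  define w where "w t = vs ! ((Suc j + t) mod n)" for t
  have "walk_on (set es - {es ! j}) ends w (n - 1)"
    unfolding walk_on_def
  proof (intro allI impI)
    fix t assume t: "t < n - 1"
    define i where "i = (Suc j + t) mod n"
    have i: "i < n" using n by (simp add: i_def)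
    have "i \<noteq> j"
      using j t by (cases "Suc j + t < n") (auto simp: i_def n_def le_mod_geq)
    then have "es ! i \<in> set es - {es ! j}"
      using i j n by (auto simp: n_def nth_eq_iff_index_eq)
    moreover have "ends (es ! i) = {w t, w (Suc t)}"
      using ends_es i by (simp add: w_def i_def mod_Suc_eq)
    ultimately show "\<exists>g\<in>set es - {es ! j}. ends g = {w t, w (Suc t)}" by blast
  qed
  moreover have "ends (es ! j) = {w (n - 1), w 0}"
  proof -
    have "Suc j + (n - 1) = j + n"
      using n by simp
    then have "(Suc j + (n - 1)) mod n = j"
      using j by (simp add: n_def)
    then show ?thesis
      using ends_es j by (simp add: w_def n_def)
  qed
  moreover have "range w \<subseteq> set vs"
    using n(2) by (auto simp: w_def n_def Suc_le_eq intro!: nth_mem)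
  ultimately show ?thesis by blast
qed

lemma cycle_through_bubble_edge_meets_Y:
  assumes cyc: "is_cycle V' E' ends vs es" and es_E: "set es \<subseteq> E"
    and only_f: "set es \<inter> S \<subseteq> {f}" and f: "f \<in> set es"
    and u: "u \<notin> Y" and u': "u' \<notin> Y"
    and I: "I = bubble_of E ends S Y u" and J: "J = bubble_of E ends S Y u'" and IJ: "I \<noteq> J"
    and ab: "a \<in> I" "b \<in> J" "ends f = {a, b}"
  shows "\<exists>y1\<in>Y \<inter> set vs. \<exists>y2\<in>Y \<inter> set vs. Hplus_adj E ends y1 I \<and> Hplus_adj E ends y2 J"
proof -
  obtain j where j: "j < length vs" "es ! j = f"
    using f cyc by (auto simp: is_cycle_def in_set_conv_nth)
  then obtain w m where walk: "walk_on (set es - {f}) ends w m"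
      and ends_f: "ends f = {w m, w 0}" and w_vs: "range w \<subseteq> set vs"
    using cycle_minus_edge_walk[OF cyc] by blast
  have walk_ES: "walk_on (E - S) ends w m"
    using walk_on_mono[OF walk] es_E only_f by blast
  have "(w 0 \<in> I \<and> w m \<in> J) \<or> (w 0 \<in> J \<and> w m \<in> I)"
    using ends_f ab by (auto simp: doubleton_eq_iff)
  then obtain t1 t2 where
    "w t1 \<in> Y" "w t2 \<in> Y" "Hplus_adj E ends (w t1) I" "Hplus_adj E ends (w t2) J"
  proof
    assume "w 0 \<in> I \<and> w m \<in> J"
    then show thesis
      using walk_between_bubbles_meets_Y[OF u u' I J IJ _ _ walk_ES] that by blast
  next
    assume "w 0 \<in> J \<and> w m \<in> I"
    then show thesis
      using walk_between_bubbles_meets_Y[OF u' u J I IJ[symmetric] _ _ walk_ES] that by blast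
  qed
  then show ?thesis
    using w_vs by blast
qed

lemma has_S_cycle_minus_mono:
  "has_S_cycle_minus V E ends S' X \<Longrightarrow> S' \<subseteq> S \<Longrightarrow> has_S_cycle_minus V E ends S X"
  unfolding has_S_cycle_minus_def by blast

lemma no_S_cycle_if_seen_pairs_hit:
  assumes u: "u \<notin> Y" and u': "u' \<notin> Y"
    and I: "I = bubble_of E ends S Y u" and J: "J = bubble_of E ends S Y u'" and IJ: "I \<noteq> J"
    and ab: "a \<in> I" "b \<in> J" "ends f = {a, b}"
    and no_vertex: "\<forall>y\<in>Y. \<not> sees_vertex E ends I J y"
    and pairs: "\<forall>x\<in>Y. \<forall>y\<in>Y. sees_pair E ends I J x y \<longrightarrow> {x, y} \<in> P"
    and no_cycle: "\<not> has_S_cycle_minus V E ends (S - {f}) X" and hits: "\<forall>p\<in>P. X \<inter> p \<noteq> {}"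
  shows "\<not> has_S_cycle_minus V E ends S X"
proof
  assume "has_S_cycle_minus V E ends S X"
  then obtain vs es where cyc: "is_cycle (V - X) {e\<in>E. ends e \<inter> X = {}} ends vs es"
    and S_edge: "set es \<inter> S \<noteq> {}"
    by (auto simp: has_S_cycle_minus_def)
  have only_f: "set es \<inter> S \<subseteq> {f}"
    using no_cycle cyc unfolding has_S_cycle_minus_def by blast
  have es_E: "set es \<subseteq> E" and vs_X: "set vs \<subseteq> V - X"
    using cyc by (auto simp: is_cycle_def)
  have "f \<in> set es"
    using S_edge only_f by blast
  then obtain y1 y2 where y: "y1 \<in> Y" "y2 \<in> Y" "y1 \<in> set vs" "y2 \<in> set vs"
      "Hplus_adj E ends y1 I" "Hplus_adj E ends y2 J"
    using cycle_through_bubble_edge_meets_Y[OF cyc es_E only_f _ u u' I J IJ ab]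
    by blast
  then have "y1 \<noteq> y2"
    using no_vertex by (auto simp: sees_vertex_def)
  with y have "{y1, y2} \<in> P"
    using pairs by (simp add: sees_pair_def)
  then have "X \<inter> {y1, y2} \<noteq> {}"
    using hits by blast
  then show False
    using y vs_X by blast
qed

theorem lemma14:
  fixes V :: "'v set" and E :: "'e set" and ends :: "'e \<Rightarrow> 'v set"
    and S :: "'e set" and P :: "'v set set" and k :: nat
    and Z Y I J :: "'v set" and f :: 'e
  assumes inst: "pcesfvs_instance V E ends S P k"
    and Z_sub: "Z \<subseteq> V - VS ends S"
    and Z_noc: "\<not> has_S_cycle_minus V E ends S Z"
    and ZY: "Z \<subseteq> Y" and Y_sub: "Y \<subseteq> V - VS ends S"
    and edge: "H_edge V E ends S Y I J"
    and no_vertex: "\<forall>y\<in>Y. \<not> sees_vertex E ends I J y"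
    and pairs: "\<forall>x\<in>Y. \<forall>y\<in>Y. sees_pair E ends I J x y \<longrightarrow> {x, y} \<in> P"
    and f_S: "f \<in> S" and f_joins: "\<exists>a\<in>I. \<exists>b\<in>J. ends f = {a, b}"
  shows "irrelevant V E ends S P k f"
proof -
  obtain u u' where u: "u \<notin> Y" "I = bubble_of E ends S Y u"
    and u': "u' \<notin> Y" "J = bubble_of E ends S Y u'" and IJ: "I \<noteq> J"
    using edge by (auto simp: H_edge_def is_bubble_def)
  obtain a b where ab: "a \<in> I" "b \<in> J" "ends f = {a, b}"
    using f_joins by blast
  have "\<not> has_S_cycle_minus V E ends S X"
    if "\<not> has_S_cycle_minus V E ends (S - {f}) X" "\<forall>p\<in>P. X \<inter> p \<noteq> {}" for X
    using no_S_cycle_if_seen_pairs_hit[OF u(1) u'(1) u(2) u'(2) IJ ab no_vertex pairs that] .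
  moreover have "has_S_cycle_minus V E ends S X" if "has_S_cycle_minus V E ends (S - {f}) X" for X
    using has_S_cycle_minus_mono[OF that] by blast
  ultimately show ?thesis
    unfolding irrelevant_def is_solution_def using f_S by blast
qed

end
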